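(* Let $n,k$ be positive integers and $i\in\{1,\ldots,n\}$ such that $k\cdot\frac{i}{n}\cdot \frac{n-i}{n}< 1$, $n\ge 8k$, and $i<n/2$. If $H\sim\text{Hyp}(n,i,k)$, then $\mathbb{P}(H \ge ik/n) \ge \frac{k}{n}$.
   Context: $\text{Hyp}(n,i,k)$ denotes the hypergeometric distribution: the number of black marbles in a sample without replacement of size $k$ from an urn with $i$ black and $n-i$ white marbles, i.e. $\mathbb{P}(H=j)=\binom{i}{j}\binom{n-i}{k-j}/\binom{n}{k}$. *)

theory Defs
  imports Complex_Main
begin

text \<open>Hypergeometric distribution Hyp(n,i,k): probability that a sample without
replacement of size k from an urn with i black and n-i white marbles contains
exactly j black marbles.\<close>
definition hyp_pmf :: "nat \<Rightarrow> nat \<Rightarrow> nat \<Rightarrow> nat \<Rightarrow> real" where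
  "hyp_pmf n i k j = real ((i choose j) * ((n - i) choose (k - j))) / real (n choose k)"

definition hyp_tail :: "nat \<Rightarrow> nat \<Rightarrow> nat \<Rightarrow> real \<Rightarrow> real" where
  "hyp_tail n i k t = (\<Sum>j\<in>{j\<in>{0..k}. real j \<ge> t}. hyp_pmf n i k j)"

end

theory Submission
  imports Defs
begin

(* Let \<mu> = ik/n. If \<mu> \<le> 1, then P(H \<ge> \<mu>) \<ge> P(H \<ge> 1) = 1 - C(n-i,k)/C(n,k),
   and C(n-i,k) \<le> C(n-1,k) = C(n,k) - (k/n) C(n,k).
   Otherwise 1 < \<mu> < 2, because k (i/n) (1 - i/n) < 1 and 1 - i/n > 1/2; moreover
   n \<ge> 8k and n > 2i force i \<ge> 9 and k \<ge> 3. The ratio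
   P(H = j+1) / P(H = j) = (i-j)(k-j) / ((j+1)(n-i-k+j+1)) then gives
   P(H = 0) \<le> P(H = 1) \<le> 27/8 P(H = 2), so 1 \<le> 31/4 P(H \<ge> 2) and
   P(H \<ge> \<mu>) \<ge> P(H \<ge> 2) \<ge> 4/31 > 1/8 \<ge> k/n. *)

lemma binomial_Suc_mult: "(m choose Suc r) * Suc r = (m choose r) * (m - r)"
proof (cases m)
  case 0
  then show ?thesis by simp
next
  case (Suc p)
  have "Suc r * (Suc p choose Suc r) = Suc p * (p choose r)"
    by (rule Suc_times_binomial)
  moreover have "(Suc p - r) * (Suc p choose r) = Suc p * ((Suc p - 1) choose r)"
    by (rule binomial_absorb_comp)
  ultimately show ?thesis
    using Suc by (simp add: mult.commute)
qed

lemma hyp_pmf_nonneg: "0 \<le> hyp_pmf n i k j"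
  by (simp add: hyp_pmf_def)

lemma hyp_pmf_sum_eq_1:
  assumes "i \<le> n" and "k \<le> n"
  shows "(\<Sum>j\<le>k. hyp_pmf n i k j) = 1"
proof -
  have "(\<Sum>j\<le>k. (i choose j) * ((n - i) choose (k - j))) = n choose k"
    using vandermonde[where r = k and m = i and n = "n - i"] assms(1) by simp
  then have "(\<Sum>j\<le>k. real ((i choose j) * ((n - i) choose (k - j)))) = real (n choose k)"
    by (metis of_nat_sum)
  moreover have "0 < n choose k"
    using assms(2) by simp
  ultimately show ?thesis
    unfolding hyp_pmf_def by (simp flip: sum_divide_distrib)
qed

lemma hyp_tail_of_nat: "hyp_tail n i k (real m) = (\<Sum>j\<in>{m..k}. hyp_pmf n i k j)"
  unfolding hyp_tail_def by (rule sum.cong) auto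

lemma hyp_tail_antimono:
  assumes "t \<le> s"
  shows "hyp_tail n i k s \<le> hyp_tail n i k t"
  unfolding hyp_tail_def
  using assms by (intro sum_mono2) (auto simp: hyp_pmf_nonneg)

lemma hyp_pmf_0_le:
  assumes "1 \<le> i" and "0 < k" and "k \<le> n"
  shows "hyp_pmf n i k 0 \<le> 1 - real k / real n"
proof -
  have pos: "0 < real (n choose k)"
    using assms(3) by simp
  have "k * (n choose k) = n * ((n - 1) choose (k - 1))"
    using times_binomial_minus1_eq[OF assms(2)] .
  then have absorb: "real k / real n = real ((n - 1) choose (k - 1)) / real (n choose k)"
    using pos assms(2,3) by (simp add: field_simps flip: of_nat_mult)
  have Pascal: "n choose k = ((n - 1) choose k) + ((n - 1) choose (k - 1))"
    using binomial_Suc_Suc[of "n - 1" "k - 1"] assms by simp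
  have "(n - i) choose k \<le> (n - 1) choose k"
    using assms(1) by (intro binomial_right_mono) simp
  then have "real ((n - i) choose k) \<le> real (n choose k) - real ((n - 1) choose (k - 1))"
    using Pascal by simp
  then show ?thesis
    using pos unfolding absorb hyp_pmf_def by (simp add: field_simps)
qed

lemma hyp_tail_1_ge:
  assumes "1 \<le> i" and "i \<le> n" and "0 < k" and "k \<le> n"
  shows "real k / real n \<le> hyp_tail n i k 1"
proof -
  have "(\<Sum>j\<le>k. hyp_pmf n i k j) = hyp_pmf n i k 0 + (\<Sum>j\<in>{1..k}. hyp_pmf n i k j)"
    by (simp add: atMost_atLeast0 sum.atLeast_Suc_atMost)
  then have "hyp_tail n i k 1 = 1 - hyp_pmf n i k 0"
    using hyp_pmf_sum_eq_1[OF assms(2,4)] hyp_tail_of_nat[of n i k 1] by simp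
  then show ?thesis
    using hyp_pmf_0_le[OF assms(1,3,4)] by simp
qed

lemma hyp_pmf_Suc_ratio:
  assumes "j < k"
  shows "hyp_pmf n i k (Suc j) * real (Suc j * ((n - i) - (k - Suc j)))
       = hyp_pmf n i k j * real ((i - j) * (k - j))"
proof -
  have "Suc (k - Suc j) = k - j"
    using assms by simp
  then have "((n - i) choose (k - j)) * (k - j) = ((n - i) choose (k - Suc j)) * ((n - i) - (k - Suc j))"
    using binomial_Suc_mult[of "n - i" "k - Suc j"] by simp
  moreover have "(i choose Suc j) * Suc j = (i choose j) * (i - j)"
    by (rule binomial_Suc_mult)
  ultimately have "(i choose Suc j) * ((n - i) choose (k - Suc j)) * (Suc j * ((n - i) - (k - Suc j)))
      = (i choose j) * ((n - i) choose (k - j)) * ((i - j) * (k - j))"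
    by (metis mult.assoc mult.left_commute)
  then show ?thesis
    unfolding hyp_pmf_def by (metis of_nat_mult times_divide_eq_left)
qed

lemma hyp_pmf_le_mult_Suc:
  assumes "j < i" and "j < k"
    and "real (Suc j * ((n - i) - (k - Suc j))) \<le> c * real ((i - j) * (k - j))"
  shows "hyp_pmf n i k j \<le> c * hyp_pmf n i k (Suc j)"
proof -
  let ?D = "real ((i - j) * (k - j))"
  have "hyp_pmf n i k j * ?D
      = hyp_pmf n i k (Suc j) * real (Suc j * ((n - i) - (k - Suc j)))"
    using hyp_pmf_Suc_ratio[OF assms(2)] by simp
  also have "\<dots> \<le> (c * hyp_pmf n i k (Suc j)) * ?D"
    using mult_left_mono[OF assms(3) hyp_pmf_nonneg] by (simp add: mult_ac)
  finally show ?thesis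
    using assms(1,2) by (simp add: mult_le_cancel_right_pos)
qed

lemma hyp_tail_2_ge:
  assumes "i \<le> n" and "k \<le> n" and "0 < n"
    and "n \<le> i * k" and "16 * n \<le> 27 * ((i - 1) * (k - 1))"
  shows "4 / 31 \<le> hyp_tail n i k 2"
proof -
  have "0 < (i - 1) * (k - 1)"
    using assms(3,5) by linarith
  then have "2 \<le> i" and "2 \<le> k"
    by simp_all
  have "(n - i) - (k - 1) \<le> i * k"
    using assms(4) by linarith
  then have "hyp_pmf n i k 0 \<le> hyp_pmf n i k 1"
    using hyp_pmf_le_mult_Suc[of 0 i k n 1] \<open>2 \<le> i\<close> \<open>2 \<le> k\<close> by (simp flip: of_nat_mult)
  moreover have "hyp_pmf n i k 1 \<le> 27 / 8 * hyp_pmf n i k 2"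
  proof -
    have "16 * (2 * ((n - i) - (k - 2))) \<le> 54 * ((i - 1) * (k - 1))"
      using assms(5) by linarith
    then have "real (2 * ((n - i) - (k - 2))) \<le> 27 / 8 * real ((i - 1) * (k - 1))"
      by (simp only: flip: of_nat_le_iff)
    then show ?thesis
      using hyp_pmf_le_mult_Suc[of 1 i k n "27 / 8", unfolded Suc_1] \<open>2 \<le> i\<close> \<open>2 \<le> k\<close>
      by simp
  qed
  moreover have "hyp_pmf n i k 2 \<le> hyp_tail n i k 2"
    using hyp_tail_of_nat[of n i k 2] \<open>2 \<le> k\<close>
    by (simp add: member_le_sum hyp_pmf_nonneg)
  moreover have "1 = hyp_pmf n i k 0 + hyp_pmf n i k 1 + hyp_tail n i k 2"
  proof -
    have "(\<Sum>j\<le>k. hyp_pmf n i k j) = hyp_pmf n i k 0 + (\<Sum>j\<in>{1..k}. hyp_pmf n i k j)"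
      by (simp add: atMost_atLeast0 sum.atLeast_Suc_atMost)
    also have "(\<Sum>j\<in>{1..k}. hyp_pmf n i k j) = hyp_pmf n i k 1 + (\<Sum>j\<in>{2..k}. hyp_pmf n i k j)"
      using \<open>2 \<le> k\<close> sum.atLeast_Suc_atMost[of 1 k] by (simp add: numeral_2_eq_2)
    finally show ?thesis
      using hyp_pmf_sum_eq_1[OF assms(1,2)] hyp_tail_of_nat[of n i k 2] by simp
  qed
  ultimately show ?thesis
    by linarith
qed

lemma pred_mult_pred_bound:
  fixes n k i :: nat
  assumes "8 * k \<le> n" and "2 * i < n" and "n < i * k"
  shows "16 * n \<le> 27 * ((i - 1) * (k - 1))"
proof -
  have "8 * k < i * k" and "2 * i < i * k"
    using assms by linarith+
  then have "9 \<le> i" and "3 \<le> k"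
    by simp_all
  then obtain p q where "i = p + 9" and "k = q + 3"
    by (metis add.commute le_Suc_ex)
  then have "16 * (i * k) \<le> 27 * ((i - 1) * (k - 1))"
    by (simp add: algebra_simps)
  with assms(3) show ?thesis
    by linarith
qed

lemma mult_lt_double_if_variance_lt_1:
  fixes n k i :: nat
  assumes "real k * (real i / real n) * (real (n - i) / real n) < 1" and "2 * i < n"
  shows "i * k < 2 * n"
proof -
  have "real n < 2 * real (n - i)"
    using assms(2) by (simp add: of_nat_diff)
  then have "real (i * k) * real n \<le> real (i * k) * (2 * real (n - i))"
    by (intro mult_left_mono) simp_all
  also have "\<dots> < 2 * real n * real n"
    using assms by (simp add: field_simps)
  finally have "real (i * k) * real n < real (2 * n) * real n"
    by simp
  then show ?thesis
    using mult_right_less_imp_less of_nat_less_iff of_nat_0_le_iff by blast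
qed

theorem lemma9:
  fixes n k i :: nat
  assumes "n > 0" and "k > 0"
    and "1 \<le> i" and "i \<le> n"
    and "real k * (real i / real n) * (real (n - i) / real n) < 1"
    and "n \<ge> 8 * k"
    and "real i < real n / 2"
  shows "hyp_tail n i k (real i * real k / real n) \<ge> real k / real n"
proof -
  define \<mu> where "\<mu> = real i * real k / real n"
  have "k \<le> n" and "2 * i < n"
    using assms(6,7) by linarith+
  show ?thesis
  proof (cases "i * k \<le> n")
    case True
    then have "\<mu> \<le> 1"
      using assms(1) by (simp add: \<mu>_def field_simps flip: of_nat_mult)
    then show ?thesis
      using hyp_tail_1_ge[OF assms(3,4,2) \<open>k \<le> n\<close>] hyp_tail_antimono[of \<mu> 1 n i k]
      unfolding \<mu>_def by linarith
  next
    case False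
    have "\<mu> < 2"
      using mult_lt_double_if_variance_lt_1[OF assms(5) \<open>2 * i < n\<close>] assms(1)
      by (simp add: \<mu>_def field_simps flip: of_nat_mult)
    have "real k / real n \<le> 4 / 31"
      using assms(1,6) by (simp add: field_simps)
    also have "\<dots> \<le> hyp_tail n i k 2"
      using False pred_mult_pred_bound[OF assms(6) \<open>2 * i < n\<close>]
      by (intro hyp_tail_2_ge[OF assms(4) \<open>k \<le> n\<close> assms(1)]) simp_all
    also have "\<dots> \<le> hyp_tail n i k \<mu>"
      using \<open>\<mu> < 2\<close> by (intro hyp_tail_antimono) simp
    finally show ?thesis
      unfolding \<mu>_def .
  qed
qed

end
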